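(* Let $(\alpha,\beta)$ be an admissible, non-null pair. If there is no $x\in(0,1)$ with $\pi_x(\alpha)=\pi_x(\beta)$, then for every $x\in(0,1)$ the map $\pi_x:\Omega_{(\alpha,\beta)}\to[0,1]$ is strictly increasing (with respect to the lexicographic order on $\Omega_{(\alpha,\beta)}$).
   Context: $\Omega=\{0,1\}^{\infty}$ is the set of infinite binary strings $\omega=\omega_0\omega_1\cdots$; $S$ is the left shift $S(\omega_0\omega_1\cdots)=\omega_1\omega_2\cdots$; $\preceq$ is the lexicographic order ($\sigma\prec\omega$ iff $\sigma\ne\omega$ and $\sigma_k<\omega_k$ at the first index $k$ where they differ), with intervals $[\alpha,\beta]=\{\omega:\alpha\preceq\omega\preceq\beta\}$ and half-open analogues. A pair $(\alpha,\beta)$ is admissible if $\alpha_0=0,\alpha_1=1,\beta_0=1,\beta_1=0$ and $S^n\alpha\notin(\alpha,\beta]$, $S^n\beta\notin[\alpha,\beta)$ for all $n\ge0$. $\Omega_{(\alpha,\beta,-)}=\{\omega:S^n\omega\notin(\alpha,\beta]\ \forall n\ge0\}$, $\Omega_{(\alpha,\beta,+)}=\{\omega:S^n\omega\notin[\alpha,\beta)\ \forall n\ge0\}$, $\Omega_{(\alpha,\beta)}=\Omega_{(\alpha,\beta,-)}\cup\Omega_{(\alpha,\beta,+)}$. For $\Gamma\subseteq\Omega$, $\Gamma_n=\{\omega_0\cdots\omega_n:\omega\in\Gamma\}$, $h(\Gamma)=\limsup_n\frac1n\ln|\Gamma_n|$; the admissible pair is non-null if $h(\Omega_{(\alpha,\beta)})>0$.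 For $x\in[0,1)$, the projection map is $\pi_x(\omega)=(1-x)\sum_{k=0}^\infty\omega_kx^k$. *)

theory Defs
  imports "HOL-Analysis.Analysis" "HOL-Library.Liminf_Limsup"
begin

text \<open>Infinite binary strings are modelled as functions nat => bool
  (True = digit 1, False = digit 0); Omega is the whole type.\<close>

type_synonym bseq = "nat \<Rightarrow> bool"

definition digit :: "bool \<Rightarrow> real" where
  "digit b = (if b then 1 else 0)"

definition shiftn :: "nat \<Rightarrow> bseq \<Rightarrow> bseq" where
  "shiftn n w = (\<lambda>k. w (k + n))"

definition lex_less :: "bseq \<Rightarrow> bseq \<Rightarrow> bool" where
  "lex_less s w \<longleftrightarrow> s \<noteq> w \<and> (\<exists>k. (\<forall>i<k. s i = w i) \<and> \<not> s k \<and> w k)"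

definition lex_le :: "bseq \<Rightarrow> bseq \<Rightarrow> bool" where
  "lex_le s w \<longleftrightarrow> s = w \<or> lex_less s w"

definition admissible :: "bseq \<Rightarrow> bseq \<Rightarrow> bool" where
  "admissible a b \<longleftrightarrow> \<not> a 0 \<and> a 1 \<and> b 0 \<and> \<not> b 1 \<and>
     (\<forall>n. \<not> (lex_less a (shiftn n a) \<and> lex_le (shiftn n a) b)) \<and>
     (\<forall>n. \<not> (lex_le a (shiftn n b) \<and> lex_less (shiftn n b) b))"

definition Omega_minus :: "bseq \<Rightarrow> bseq \<Rightarrow> bseq set" where
  "Omega_minus a b = {w. \<forall>n. \<not> (lex_less a (shiftn n w) \<and> lex_le (shiftn n w) b)}"

definition Omega_plus :: "bseq \<Rightarrow> bseq \<Rightarrow> bseq set" where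
  "Omega_plus a b = {w. \<forall>n. \<not> (lex_le a (shiftn n w) \<and> lex_less (shiftn n w) b)}"

definition Omega_ab :: "bseq \<Rightarrow> bseq \<Rightarrow> bseq set" where
  "Omega_ab a b = Omega_minus a b \<union> Omega_plus a b"

definition prefixes :: "bseq set \<Rightarrow> nat \<Rightarrow> bool list set" where
  "prefixes G n = (\<lambda>w. map w [0..<Suc n]) ` G"

definition entropy :: "bseq set \<Rightarrow> ereal" where
  "entropy G = limsup (\<lambda>n. ereal (ln (real (card (prefixes G n))) / real n))"

definition nonnull :: "bseq \<Rightarrow> bseq \<Rightarrow> bool" where
  "nonnull a b \<longleftrightarrow> entropy (Omega_ab a b) > 0"

definition proj :: "real \<Rightarrow> bseq \<Rightarrow> real" where
  "proj x w = (1 - x) * (\<Sum>k. digit (w k) * x ^ k)"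

end

theory Submission
  imports Defs
begin

text \<open>
  Every word of \<open>Omega_ab \<alpha> \<beta>\<close> starting with 0 is lexicographically below \<open>\<alpha>\<close>, every word
  starting with 1 is above \<open>\<beta>\<close>, and \<open>Omega_ab \<alpha> \<beta>\<close> is shift invariant. Hence, if at some \<open>x\<close>
  the value \<open>proj x \<alpha>\<close> is the largest value of \<open>proj x\<close> on the 0-words of \<open>Omega_ab \<alpha> \<beta>\<close>,
  \<open>proj x \<beta>\<close> the smallest on its 1-words, and \<open>proj x \<alpha> < proj x \<beta>\<close>, then comparing
  \<open>s \<prec> w\<close> at their first differing digit \<open>k\<close> gives
  \<open>proj x w - proj x s \<ge> x ^ k * (proj x \<beta> - proj x \<alpha>) > 0\<close>.

  The inequality \<open>proj x \<alpha> < proj x \<beta>\<close> holds for small \<open>x\<close>, hence on all of \<open>(0,1)\<close> by the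
  intermediate value theorem. The extremality property holds for \<open>x \<le> 1/4\<close>, and the same
  first-digit estimate upgrades it from an error \<open>c\<close> to error 0 as soon as
  \<open>2 * c \<le> proj x \<beta> - proj x \<alpha>\<close>. Since \<open>proj x \<omega>\<close> is Lipschitz in \<open>x\<close>, locally uniformly in \<open>\<omega>\<close>,
  extremality is therefore locally constant in \<open>x\<close>, so it holds on the connected set \<open>(0,1)\<close>.
\<close>

lemma summable_digit_power:
  assumes "0 \<le> x" "x < 1"
  shows "summable (\<lambda>k. digit (w k) * x ^ k)"
  by (rule summable_comparison_test[where g = "\<lambda>k. x ^ k"])
     (use assms in \<open>auto simp: digit_def\<close>)

lemma digit_power_suminf_bounds:
  assumes "0 \<le> x" "x < 1"
  shows "0 \<le> (\<Sum>k. digit (w k) * x ^ k)" "(\<Sum>k. digit (w k) * x ^ k) \<le> 1 / (1 - x)"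
proof -
  show "0 \<le> (\<Sum>k. digit (w k) * x ^ k)"
    using assms by (intro suminf_nonneg summable_digit_power) (auto simp: digit_def)
  have "(\<Sum>k. digit (w k) * x ^ k) \<le> (\<Sum>k. x ^ k)"
    using assms by (intro suminf_le summable_digit_power) (auto simp: digit_def)
  then show "(\<Sum>k. digit (w k) * x ^ k) \<le> 1 / (1 - x)"
    using suminf_geometric[of x] assms by simp
qed

lemma digit_power_suminf_increment:
  assumes "0 \<le> y" "y \<le> x" "x < 1"
  shows "0 \<le> (\<Sum>k. digit (w k) * x ^ k) - (\<Sum>k. digit (w k) * y ^ k)"
    and "(\<Sum>k. digit (w k) * x ^ k) - (\<Sum>k. digit (w k) * y ^ k) \<le> 1 / (1 - x) - 1 / (1 - y)"
proof -
  have sx: "summable (\<lambda>k. digit (w k) * x ^ k)" and sy: "summable (\<lambda>k. digit (w k) * y ^ k)"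
    using assms by (auto intro: summable_digit_power)
  have geo: "summable (\<lambda>k. x ^ k)" "summable (\<lambda>k. y ^ k)"
    using assms by auto
  have pow: "y ^ k \<le> x ^ k" for k
    using assms by (intro power_mono) auto
  have diff: "(\<Sum>k. digit (w k) * x ^ k) - (\<Sum>k. digit (w k) * y ^ k)
      = (\<Sum>k. digit (w k) * (x ^ k - y ^ k))"
    using suminf_diff[OF sx sy] by (simp add: right_diff_distrib)
  have sd: "summable (\<lambda>k. digit (w k) * (x ^ k - y ^ k))"
    using summable_diff[OF sx sy] by (simp add: right_diff_distrib)
  show "0 \<le> (\<Sum>k. digit (w k) * x ^ k) - (\<Sum>k. digit (w k) * y ^ k)"
    unfolding diff using pow by (intro suminf_nonneg[OF sd]) (auto simp: digit_def)
  have "(\<Sum>k. digit (w k) * (x ^ k - y ^ k)) \<le> (\<Sum>k. x ^ k - y ^ k)"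
    using pow by (intro suminf_le[OF _ sd summable_diff[OF geo]]) (auto simp: digit_def)
  also have "\<dots> = 1 / (1 - x) - 1 / (1 - y)"
    using suminf_diff[OF geo] suminf_geometric[of x] suminf_geometric[of y] assms by simp
  finally show "(\<Sum>k. digit (w k) * x ^ k) - (\<Sum>k. digit (w k) * y ^ k) \<le> 1 / (1 - x) - 1 / (1 - y)"
    unfolding diff .
qed

lemma proj_nonneg: "0 \<le> x \<Longrightarrow> x < 1 \<Longrightarrow> 0 \<le> proj x w"
  unfolding proj_def using digit_power_suminf_bounds(1) by simp

lemma proj_le_one: "0 \<le> x \<Longrightarrow> x < 1 \<Longrightarrow> proj x w \<le> 1"
  unfolding proj_def using digit_power_suminf_bounds(2)[of x w]
  by (simp add: mult.commute pos_le_divide_eq)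

lemma proj_shiftn:
  assumes "0 \<le> x" "x < 1"
  shows "proj x w = (1 - x) * (\<Sum>k<j. digit (w k) * x ^ k) + x ^ j * proj x (shiftn j w)"
proof -
  have "(\<Sum>k. digit (w (k + j)) * x ^ (k + j)) = (\<Sum>k. x ^ j * (digit (shiftn j w k) * x ^ k))"
    by (simp add: shiftn_def power_add mult_ac)
  also have "\<dots> = x ^ j * (\<Sum>k. digit (shiftn j w k) * x ^ k)"
    by (rule suminf_mult[OF summable_digit_power[OF assms]])
  finally have "(\<Sum>k. digit (w (k + j)) * x ^ (k + j)) = x ^ j * (\<Sum>k. digit (shiftn j w k) * x ^ k)" .
  then show ?thesis
    unfolding proj_def
    using suminf_split_initial_segment[OF summable_digit_power[OF assms], of w j]
    by (simp add: algebra_simps)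
qed

lemma proj_diff_common_prefix:
  assumes "0 \<le> x" "x < 1" "\<forall>i<j. s i = w i"
  shows "proj x w - proj x s = x ^ j * (proj x (shiftn j w) - proj x (shiftn j s))"
  using proj_shiftn[OF assms(1,2), of w j] proj_shiftn[OF assms(1,2), of s j] assms(3)
  by (simp add: algebra_simps)

lemma proj_first_digit:
  assumes "0 \<le> x" "x < 1"
  shows "\<not> w 0 \<Longrightarrow> proj x w \<le> x" and "w 0 \<Longrightarrow> 1 - x \<le> proj x w"
proof -
  have split: "proj x w = (1 - x) * digit (w 0) + x * proj x (shiftn 1 w)"
    using proj_shiftn[OF assms, of w 1] by simp
  have "0 \<le> x * proj x (shiftn 1 w)" "x * proj x (shiftn 1 w) \<le> x"
    using assms proj_nonneg[OF assms] mult_left_le[OF proj_le_one[OF assms]] by auto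
  then show "\<not> w 0 \<Longrightarrow> proj x w \<le> x" and "w 0 \<Longrightarrow> 1 - x \<le> proj x w"
    using split by (auto simp: digit_def)
qed

lemma proj_lipschitz:
  assumes "r < 1"
  shows "(1 / (1 - r))-lipschitz_on {0..r} (\<lambda>x. proj x w)"
proof (rule lipschitz_onI)
  have bound: "\<bar>proj x w - proj y w\<bar> \<le> (x - y) / (1 - r)"
    if "0 \<le> y" "y \<le> x" "x \<le> r" for x y
  proof -
    let ?S = "\<lambda>x. \<Sum>k. digit (w k) * x ^ k"
    have x1: "x < 1" and y1: "y < 1" using that assms by auto
    have "(1 - x) * (?S x - ?S y) \<le> (1 - x) * (1 / (1 - x) - 1 / (1 - y))"
      using digit_power_suminf_increment(2)[OF that(1,2) x1] x1 by (intro mult_left_mono) auto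
    also have "\<dots> = (x - y) / (1 - y)"
      using x1 y1 by (simp add: right_diff_distrib diff_divide_distrib) (simp add: field_simps)
    finally have A: "(1 - x) * (?S x - ?S y) \<le> (x - y) / (1 - y)" .
    have "(x - y) * ?S y \<le> (x - y) * (1 / (1 - y))"
      using digit_power_suminf_bounds(2)[OF that(1) y1] that by (intro mult_left_mono) auto
    then have B: "(x - y) * ?S y \<le> (x - y) / (1 - y)" by simp
    have "0 \<le> (1 - x) * (?S x - ?S y)" "0 \<le> (x - y) * ?S y"
      using digit_power_suminf_increment(1)[OF that(1,2) x1] digit_power_suminf_bounds(1)[OF that(1) y1]
        that x1 by auto
    moreover have "proj x w - proj y w = (1 - x) * (?S x - ?S y) - (x - y) * ?S y"
      unfolding proj_def by (simp add: algebra_simps)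
    moreover have "(x - y) / (1 - y) \<le> (x - y) / (1 - r)"
      using that y1 assms by (intro divide_left_mono) auto
    ultimately show ?thesis using A B by linarith
  qed
  show "dist (proj x w) (proj y w) \<le> 1 / (1 - r) * dist x y" if "x \<in> {0..r}" "y \<in> {0..r}" for x y
    using that bound[of y x] bound[of x y]
    by (cases "y \<le> x") (auto simp: dist_real_def abs_minus_commute)
  show "0 \<le> 1 / (1 - r)" using assms by simp
qed

lemma not_lex_less_imp_lex_le: "\<not> lex_less s w \<Longrightarrow> lex_le w s"
proof (rule ccontr)
  assume "\<not> lex_less s w" "\<not> lex_le w s"
  then have "\<exists>k. s k \<noteq> w k" unfolding lex_le_def by auto
  define k where "k = (LEAST k. s k \<noteq> w k)"
  have "s k \<noteq> w k" unfolding k_def by (rule LeastI_ex) fact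
  moreover have "\<forall>i<k. s i = w i" unfolding k_def using not_less_Least by blast
  ultimately show False
    using \<open>\<not> lex_less s w\<close> \<open>\<not> lex_le w s\<close> unfolding lex_le_def lex_less_def by (metis (full_types))
qed

lemma shiftn_0 [simp]: "shiftn 0 w = w"
  by (simp add: shiftn_def)

lemma shiftn_shiftn [simp]: "shiftn n (shiftn j w) = shiftn (n + j) w"
  by (simp add: shiftn_def add.assoc)

lemma shiftn_apply_0 [simp]: "shiftn j w 0 = w j"
  by (simp add: shiftn_def)

lemma Omega_ab_shiftn: "w \<in> Omega_ab a b \<Longrightarrow> shiftn j w \<in> Omega_ab a b"
  unfolding Omega_ab_def Omega_minus_def Omega_plus_def by auto

lemma Omega_ab_not_between:
  "w \<in> Omega_ab a b \<Longrightarrow> \<not> (lex_less a w \<and> lex_less w b)"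
  unfolding Omega_ab_def Omega_minus_def Omega_plus_def lex_le_def
  by (auto dest: spec[of _ 0])

lemma admissible_in_Omega_ab:
  "admissible a b \<Longrightarrow> a \<in> Omega_ab a b" "admissible a b \<Longrightarrow> b \<in> Omega_ab a b"
  unfolding admissible_def Omega_ab_def Omega_minus_def Omega_plus_def by auto

lemma admissible_first_digits: "admissible a b \<Longrightarrow> \<not> a 0" "admissible a b \<Longrightarrow> b 0"
  unfolding admissible_def by auto

lemma admissible_proj_bounds:
  assumes "admissible a b" "0 \<le> x" "x < 1"
  shows "proj x a \<le> x" "1 - x \<le> proj x b"
  using proj_first_digit[OF assms(2,3)] admissible_first_digits[OF assms(1)] by auto

lemma Omega_ab_lex_le_alpha:
  assumes "admissible a b" "u \<in> Omega_ab a b" "\<not> u 0"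
  shows "lex_le u a"
proof -
  have "lex_less u b"
    using assms admissible_first_digits unfolding lex_less_def by (intro conjI exI[of _ 0]) auto
  then show ?thesis
    using Omega_ab_not_between[OF assms(2)] not_lex_less_imp_lex_le by blast
qed

lemma Omega_ab_beta_lex_le:
  assumes "admissible a b" "v \<in> Omega_ab a b" "v 0"
  shows "lex_le b v"
proof -
  have "lex_less a v"
    using assms admissible_first_digits unfolding lex_less_def by (intro conjI exI[of _ 0]) auto
  then show ?thesis
    using Omega_ab_not_between[OF assms(2)] not_lex_less_imp_lex_le by blast
qed

text \<open>By \<open>Omega_ab_lex_le_alpha\<close> and \<open>Omega_ab_beta_lex_le\<close>, \<open>\<alpha>\<close> and \<open>\<beta>\<close> are the lexicographic
  maximum of the 0-words and minimum of the 1-words of \<open>Omega_ab \<alpha> \<beta>\<close>; \<open>ends_extremal c\<close> says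
  that \<open>proj x\<close> respects this up to an error \<open>c\<close>.\<close>

definition ends_extremal :: "real \<Rightarrow> bseq \<Rightarrow> bseq \<Rightarrow> real \<Rightarrow> bool" where
  "ends_extremal c a b x \<longleftrightarrow>
     (\<forall>u\<in>Omega_ab a b. \<not> u 0 \<longrightarrow> proj x u \<le> proj x a + c) \<and>
     (\<forall>v\<in>Omega_ab a b. v 0 \<longrightarrow> proj x b \<le> proj x v + c)"

lemma proj_gap_lex_less:
  assumes x: "0 \<le> x" "x < 1" and ext: "ends_extremal c a b x"
    and s: "s \<in> Omega_ab a b" and w: "w \<in> Omega_ab a b" and "lex_less s w"
  shows "\<exists>k. x ^ k * (proj x b - proj x a - 2 * c) \<le> proj x w - proj x s"
proof -
  obtain k where k: "\<forall>i<k. s i = w i" "\<not> s k" "w k"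
    using \<open>lex_less s w\<close> unfolding lex_less_def by blast
  have "proj x b \<le> proj x (shiftn k w) + c"
    using ext Omega_ab_shiftn[OF w] k(3) unfolding ends_extremal_def by simp
  moreover have "proj x (shiftn k s) \<le> proj x a + c"
    using ext Omega_ab_shiftn[OF s] k(2) unfolding ends_extremal_def by simp
  ultimately have "x ^ k * (proj x b - proj x a - 2 * c)
      \<le> x ^ k * (proj x (shiftn k w) - proj x (shiftn k s))"
    using x by (intro mult_left_mono) auto
  then show ?thesis
    using proj_diff_common_prefix[OF x k(1)] by auto
qed

lemma ends_extremal_sharpen:
  assumes adm: "admissible a b" and x: "0 \<le> x" "x < 1"
    and ext: "ends_extremal c a b x" and gap: "2 * c \<le> proj x b - proj x a"
  shows "ends_extremal 0 a b x"
proof -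
  have "proj x s \<le> proj x w"
    if "s \<in> Omega_ab a b" "w \<in> Omega_ab a b" "lex_le s w" for s w
  proof (cases "s = w")
    case False
    with that obtain k where "x ^ k * (proj x b - proj x a - 2 * c) \<le> proj x w - proj x s"
      using proj_gap_lex_less[OF x ext] unfolding lex_le_def by blast
    moreover have "0 \<le> x ^ k * (proj x b - proj x a - 2 * c)"
      using x gap by simp
    ultimately show ?thesis by simp
  qed simp
  then show ?thesis
    unfolding ends_extremal_def
    using admissible_in_Omega_ab[OF adm] Omega_ab_lex_le_alpha[OF adm] Omega_ab_beta_lex_le[OF adm]
    by auto
qed

lemma ends_extremal_small:
  assumes adm: "admissible a b" and x: "0 \<le> x" "x \<le> 1/4"
  shows "ends_extremal 0 a b x"
proof (rule ends_extremal_sharpen[OF adm, where c = x])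
  have x1: "x < 1" using x by simp
  note a = proj_nonneg[OF x(1) x1, of a] admissible_proj_bounds(1)[OF adm x(1) x1]
  note b = proj_le_one[OF x(1) x1, of b] admissible_proj_bounds(2)[OF adm x(1) x1]
  have "proj x u \<le> proj x a + x" if "\<not> u 0" for u
    using proj_first_digit(1)[OF x(1) x1, of u] that a by linarith
  moreover have "proj x b \<le> proj x v + x" if "v 0" for v
    using proj_first_digit(2)[OF x(1) x1, of v] that b by linarith
  ultimately show "ends_extremal x a b x"
    unfolding ends_extremal_def by blast
  show "2 * x \<le> proj x b - proj x a"
    using a b x by linarith
qed (use x in auto)

lemma ends_extremal_perturb:
  assumes r: "r < 1" and xy: "x \<in> {0..r}" "y \<in> {0..r}" and ext: "ends_extremal c a b y"
  shows "ends_extremal (c + 2 * \<bar>x - y\<bar> / (1 - r)) a b x"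
proof -
  have near: "\<bar>proj x w - proj y w\<bar> \<le> \<bar>x - y\<bar> / (1 - r)" for w
    using lipschitz_onD[OF proj_lipschitz[OF r] xy] by (simp add: dist_real_def)
  show ?thesis
    unfolding ends_extremal_def
  proof (intro conjI ballI impI)
    fix u assume "u \<in> Omega_ab a b" "\<not> u 0"
    then have "proj y u \<le> proj y a + c"
      using ext unfolding ends_extremal_def by blast
    then show "proj x u \<le> proj x a + (c + 2 * \<bar>x - y\<bar> / (1 - r))"
      using near[of u] near[of a] by (simp add: abs_le_iff)
  next
    fix v assume "v \<in> Omega_ab a b" "v 0"
    then have "proj y b \<le> proj y v + c"
      using ext unfolding ends_extremal_def by blast
    then show "proj x b \<le> proj x v + (c + 2 * \<bar>x - y\<bar> / (1 - r))"
      using near[of v] near[of b] by (simp add: abs_le_iff)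
  qed
qed

lemma ends_extremal_iff_near:
  assumes adm: "admissible a b" and r: "r < 1" and xy: "x \<in> {0..r}" "y \<in> {0..r}"
    and close: "6 * \<bar>x - y\<bar> / (1 - r) \<le> proj x b - proj x a"
  shows "ends_extremal 0 a b x \<longleftrightarrow> ends_extremal 0 a b y"
proof -
  define \<delta> where "\<delta> = \<bar>x - y\<bar> / (1 - r)"
  have \<delta>: "0 \<le> \<delta>" "6 * \<delta> \<le> proj x b - proj x a"
    using r close unfolding \<delta>_def by auto
  have "\<bar>proj y w - proj x w\<bar> \<le> \<delta>" for w
    using lipschitz_onD[OF proj_lipschitz[OF r] xy(2,1)] unfolding \<delta>_def
    by (simp add: dist_real_def abs_minus_commute)
  then have gap_y: "4 * \<delta> \<le> proj y b - proj y a"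
    using \<delta> by (smt (verit) abs_le_iff)
  show ?thesis
  proof
    assume "ends_extremal 0 a b x"
    then have "ends_extremal (2 * \<delta>) a b y"
      using ends_extremal_perturb[OF r xy(2,1), of 0] unfolding \<delta>_def by (simp add: abs_minus_commute[of y x])
    then show "ends_extremal 0 a b y"
      using ends_extremal_sharpen[OF adm] xy r gap_y by auto
  next
    assume "ends_extremal 0 a b y"
    then have "ends_extremal (2 * \<delta>) a b x"
      using ends_extremal_perturb[OF r xy, of 0] unfolding \<delta>_def by simp
    then show "ends_extremal 0 a b x"
      using ends_extremal_sharpen[OF adm] xy r \<delta> by auto
  qed
qed

lemma ends_extremal_everywhere:
  assumes adm: "admissible a b" and less: "\<forall>x\<in>{0<..<1::real}. proj x a < proj x b"
    and x: "x \<in> {0<..<1}"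
  shows "ends_extremal 0 a b x"
proof (rule connected_induction_simple[where S = "{0<..<1}" and a = "1/4"])
  show "ends_extremal 0 a b (1/4)"
    using ends_extremal_small[OF adm] by simp
  fix z :: real assume z: "z \<in> {0<..<1}"
  define r where "r = (1 + z) / 2"
  define \<eta> where "\<eta> = min ((1 - z) / 2) ((proj z b - proj z a) * (1 - r) / 6)"
  have r: "z < r" "r < 1" using z unfolding r_def by auto
  have "0 < \<eta>" using less z r unfolding \<eta>_def by auto
  have \<eta>: "\<eta> \<le> (1 - z) / 2" "\<eta> \<le> (proj z b - proj z a) * (1 - r) / 6"
    unfolding \<eta>_def by (rule min.cobounded1, rule min.cobounded2)
  let ?T = "{0<..<1} \<inter> ball z \<eta>"
  have ext_iff: "ends_extremal 0 a b y \<longleftrightarrow> ends_extremal 0 a b z" if "y \<in> ?T" for y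
  proof (rule sym, rule ends_extremal_iff_near[OF adm r(2)])
    have zy: "\<bar>z - y\<bar> < \<eta>" using that by (simp add: dist_real_def)
    then show "y \<in> {0..r}"
      using that \<eta>(1) unfolding r_def by (auto simp: abs_less_iff)
    have "6 * \<bar>z - y\<bar> \<le> 6 * \<eta>"
      using zy by simp
    also have "\<dots> \<le> (proj z b - proj z a) * (1 - r)"
      using \<eta>(2) by simp
    finally have "6 * \<bar>z - y\<bar> \<le> (proj z b - proj z a) * (1 - r)" .
    then show "6 * \<bar>z - y\<bar> / (1 - r) \<le> proj z b - proj z a"
      using r by (simp add: pos_divide_le_eq)
    show "z \<in> {0..r}" using z r by auto
  qed
  show "\<exists>T. openin (top_of_set {0<..<1}) T \<and> z \<in> T \<and>
      (\<forall>x\<in>T. \<forall>y\<in>T. ends_extremal 0 a b x \<longrightarrow> ends_extremal 0 a b y)"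
  proof (intro exI[of _ ?T] conjI ballI impI)
    show "openin (top_of_set {0<..<1}) ?T"
      by (intro openin_open_Int) simp
    show "z \<in> ?T" using \<open>0 < \<eta>\<close> z by simp
    show "ends_extremal 0 a b y" if "x \<in> ?T" "y \<in> ?T" "ends_extremal 0 a b x" for x y
      using ext_iff[OF that(1)] ext_iff[OF that(2)] that(3) by blast
  qed
qed (use x in auto)

lemma proj_alpha_less_beta:
  assumes adm: "admissible a b"
    and no_eq: "\<not> (\<exists>x\<in>{0<..<1::real}. proj x a = proj x b)"
    and x: "0 < x" "x < 1"
  shows "proj x a < proj x b"
proof (rule ccontr)
  let ?g = "\<lambda>x. proj x b - proj x a"
  assume "\<not> proj x a < proj x b"
  then have "?g x \<le> 0" by simp
  moreover have "0 \<le> ?g (1/4)"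
    using admissible_proj_bounds[OF adm, of "1/4"] by simp
  moreover have "1/4 \<le> x"
  proof -
    have "proj x a \<le> x" "1 - x \<le> proj x b"
      using admissible_proj_bounds[OF adm] x by auto
    then show ?thesis using \<open>?g x \<le> 0\<close> by linarith
  qed
  moreover have "continuous_on {1/4..x} ?g"
  proof -
    have "continuous_on {0..x} (\<lambda>t. proj t w)" for w
      by (rule lipschitz_on_continuous_on[OF proj_lipschitz[OF x(2)]])
    then show ?thesis
      by (intro continuous_on_diff; rule continuous_on_subset) auto
  qed
  ultimately obtain z where z: "1/4 \<le> z" "z \<le> x" "?g z = 0"
    using IVT2'[of ?g x 0 "1/4"] by auto
  then have "z \<in> {0<..<1}" "proj z a = proj z b"
    using x by auto
  with no_eq show False by blast
qed

theorem lemma1: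
  fixes \<alpha> \<beta> :: bseq
  assumes "admissible \<alpha> \<beta>"
    and "nonnull \<alpha> \<beta>"
    and "\<not> (\<exists>x\<in>{0<..<1::real}. proj x \<alpha> = proj x \<beta>)"
  shows "\<forall>x\<in>{0<..<1::real}. \<forall>s\<in>Omega_ab \<alpha> \<beta>. \<forall>w\<in>Omega_ab \<alpha> \<beta>.
           lex_less s w \<longrightarrow> proj x s < proj x w"
proof (intro ballI impI)
  fix x s w
  assume x: "x \<in> {0<..<1::real}"
    and sw: "s \<in> Omega_ab \<alpha> \<beta>" "w \<in> Omega_ab \<alpha> \<beta>" "lex_less s w"
  have less: "\<forall>x\<in>{0<..<1::real}. proj x \<alpha> < proj x \<beta>"
    using proj_alpha_less_beta[OF assms(1,3)] by auto
  have "ends_extremal 0 \<alpha> \<beta> x"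
    by (rule ends_extremal_everywhere[OF assms(1) less x])
  then obtain k where "x ^ k * (proj x \<beta> - proj x \<alpha> - 2 * 0) \<le> proj x w - proj x s"
    using proj_gap_lex_less[OF _ _ _ sw, of x 0] x by auto
  moreover have "0 < x ^ k * (proj x \<beta> - proj x \<alpha>)"
    using less x by simp
  ultimately show "proj x s < proj x w" by simp
qed

end
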